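(* In the setting below, under one of the mechanisms (g), (mp), (mn) with corresponding label $\square$, for each $1\le k\le n_1$ let $\mathcal I^\alpha_{\texttt t,k}=\{c\in\mathbb R:\tilde p^{\square}_{\texttt t,k,c}>\alpha\}$. Then $\mathcal I^\alpha_{\texttt t,k}$ is a $1-\alpha$ prediction set for $\tau_{\texttt t(k)}$ (i.e. $\mathbb P(\tau_{\texttt t(k)}\in\mathcal I^\alpha_{\texttt t,k})\ge1-\alpha$), it is a one-sided interval of the form $[\hat\tau_{\texttt t(k)},\infty)$ or $(\hat\tau_{\texttt t(k)},\infty)$ with $\hat\tau_{\texttt t(k)}=\inf\mathcal I^\alpha_{\texttt t,k}$, and these sets are simultaneously valid: $\mathbb P\big(\tau_{\texttt t(k)}\in\mathcal I^\alpha_{\texttt t,k}\text{ for all }1\le k\le n_1\big)\ge1-\alpha$.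
   Context: There are $n$ units with fixed potential outcomes $Y_i^\star(0),Y_i^\star(1)\in\mathbb R$ and fixed potential missingness indicators $M_i(0),M_i(1)\in\{0,1\}$; $\tau_i=Y_i^\star(1)-Y_i^\star(0)$. $\boldsymbol Z\in\{0,1\}^n$ is from a completely randomized experiment (CRE): uniform over vectors with exactly $n_1$ ones ($n_1,n_0\ge1$ fixed, $n_1+n_0=n$), independent of all potential quantities. $M_i=Z_iM_i(1)+(1-Z_i)M_i(0)$; the realized outcome $Z_iY_i^\star(1)+(1-Z_i)Y_i^\star(0)$ is observed, denoted $Y_i$, iff $M_i=1$. $\tau_{\texttt t(1)}\le\dots\le\tau_{\texttt t(n_1)}$ are the sorted values of $\{\tau_i:Z_i=1\}$. Mechanisms: (g) $M_i(1),M_i(0)$ arbitrary constants; (mp) $M_i(1)\ge M_i(0)$ for all $i$; (mn) $M_i(1)\le M_i(0)$ for all $i$. Statistics: $\overline{\mathbb R}=\mathbb R\cup\{\pm\infty\}$; $\psi_{i,j}(y,y')=\mathbf 1\{y>y'\}+\mathbf 1\{y=y'\}\mathbf 1\{i\ge j\}$; $\mathrm{rank}_i(\boldsymbol y)=\sum_j\psi_{i,j}(y_i,y_j)$; $\phi$ nondecreasing on the nonnegative integers; $t_{\mathrm R,\phi}(\boldsymbol z,\boldsymbol y)$ is either $\sum_i z_i\phi(\mathrm{rank}_i(\boldsymbol y))$ or $\sum_i z_i\phi(\sum_j(1-z_j)\psi_{i,j}(y_i,y_j))$; $G_{\mathrm R,\phi}(c)=\mathbb P(t_{\mathrm R,\phi}(\boldsymbol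 A,\boldsymbol y_0)\ge c)$, $\boldsymbol A$ from the CRE, $\boldsymbol y_0\in\mathbb R^n$ any fixed vector. p-values: for $\boldsymbol\delta\in\mathbb R^n$, $\tilde{\boldsymbol Y}^{\square}_{\boldsymbol Z,\boldsymbol\delta}(0)\in\overline{\mathbb R}^n$ has coordinate $Y_i-\delta_i$ if $Z_i=M_i=1$, $Y_i$ if $Z_i=0,M_i=1$; if $Z_i=1,M_i=0$ it is $-\infty,+\infty,-\infty$ for $\square=\texttt g,\texttt{mp},\texttt{mn}$; if $Z_i=0,M_i=0$ it is $+\infty,+\infty,-\infty$ respectively. With $\mathcal J=\{i:Z_i=M_i=1\}=\{j_1,\dots,j_{n_{11}}\}$ ordered so that $\psi_{j_{l+1},j_l}(Y_{j_{l+1}},Y_{j_l})=1$, $\mathcal J_L=\{j_{n_{11}-L+1},\dots,j_{n_{11}}\}$, $\mathcal J_0=\emptyset$, and fixed $\kappa>0$, let $\xi_{k,c,i}=\max_{l:Z_l=M_l=1}Y_l-\min_{l:Z_l=0,M_l=1}Y_l+\kappa$ for $i\in\mathcal J_{\min\{n_1-k,n_{11}\}}$ and $\xi_{k,c,i}=c$ otherwise; then $\tilde p^{\square}_{\texttt t,k,c}=G_{\mathrm R,\phi}(t_{\mathrm R,\phi}(\boldsymbol Z,\tilde{\boldsymbol Y}^{\square}_{\boldsymbol Z,\boldsymbol\xi_{k,c}}(0)))$. *)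

theory Defs
  imports Complex_Main "HOL-Library.Extended_Real"
begin

text \<open>Units are indexed by 0,...,n-1. An assignment vector Z is represented by its set of
treated units. Missingness indicators are booleans (True = outcome observed).\<close>

datatype mech = Mg | Mmp | Mmn

definition psi :: "nat \<Rightarrow> nat \<Rightarrow> 'a::linorder \<Rightarrow> 'a \<Rightarrow> nat" where
  "psi i j y y' = (if y > y' then 1 else 0) + (if y = y' \<and> i \<ge> j then 1 else 0)"

definition tstat :: "bool \<Rightarrow> (nat \<Rightarrow> real) \<Rightarrow> nat \<Rightarrow> nat set \<Rightarrow> (nat \<Rightarrow> ereal) \<Rightarrow> real" where
  "tstat v phi n z y =
     (if v then (\<Sum>i<n. if i \<in> z then phi (\<Sum>j<n. psi i j (y i) (y j)) else 0)
      else (\<Sum>i<n. if i \<in> z then phi (\<Sum>j<n. if j \<notin> z then psi i j (y i) (y j) else 0) else 0))"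

definition cre :: "nat \<Rightarrow> nat \<Rightarrow> nat set set" where
  "cre n n1 = {z. z \<subseteq> {..<n} \<and> card z = n1}"

definition prob_cre :: "nat \<Rightarrow> nat \<Rightarrow> (nat set \<Rightarrow> bool) \<Rightarrow> real" where
  "prob_cre n n1 P = real (card {z \<in> cre n n1. P z}) / real (card (cre n n1))"

definition Gfun :: "bool \<Rightarrow> (nat \<Rightarrow> real) \<Rightarrow> nat \<Rightarrow> nat \<Rightarrow> (nat \<Rightarrow> real) \<Rightarrow> real \<Rightarrow> real" where
  "Gfun v phi n n1 y0 c = prob_cre n n1 (\<lambda>a. tstat v phi n a (\<lambda>i. ereal (y0 i)) \<ge> c)"

definition Mobs :: "(nat \<Rightarrow> bool) \<Rightarrow> (nat \<Rightarrow> bool) \<Rightarrow> nat set \<Rightarrow> nat \<Rightarrow> bool" where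
  "Mobs M1 M0 Z i = (if i \<in> Z then M1 i else M0 i)"

definition Yobs :: "(nat \<Rightarrow> real) \<Rightarrow> (nat \<Rightarrow> real) \<Rightarrow> nat set \<Rightarrow> nat \<Rightarrow> real" where
  "Yobs Y1 Y0 Z i = (if i \<in> Z then Y1 i else Y0 i)"

text \<open>Imputed control potential outcome vector in extended reals.\<close>
definition Ytil :: "mech \<Rightarrow> nat set \<Rightarrow> (nat \<Rightarrow> bool) \<Rightarrow> (nat \<Rightarrow> real) \<Rightarrow> (nat \<Rightarrow> real) \<Rightarrow> nat \<Rightarrow> ereal" where
  "Ytil m Z Mo Yo \<delta> i =
     (if i \<in> Z then (if Mo i then ereal (Yo i - \<delta> i)
                     else (case m of Mg \<Rightarrow> -\<infinity> | Mmp \<Rightarrow> \<infinity> | Mmn \<Rightarrow> -\<infinity>))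
      else (if Mo i then ereal (Yo i)
            else (case m of Mg \<Rightarrow> \<infinity> | Mmp \<Rightarrow> \<infinity> | Mmn \<Rightarrow> -\<infinity>)))"

definition Jset :: "nat \<Rightarrow> nat set \<Rightarrow> (nat \<Rightarrow> bool) \<Rightarrow> nat set" where
  "Jset n Z Mo = {i \<in> {..<n}. i \<in> Z \<and> Mo i}"

definition Cobs :: "nat \<Rightarrow> nat set \<Rightarrow> (nat \<Rightarrow> bool) \<Rightarrow> nat set" where
  "Cobs n Z Mo = {i \<in> {..<n}. i \<notin> Z \<and> Mo i}"

text \<open>Position (1-based) of unit i in the ordering j_1,...,j_{n11} of J.\<close>
definition rankJ :: "nat \<Rightarrow> nat set \<Rightarrow> (nat \<Rightarrow> bool) \<Rightarrow> (nat \<Rightarrow> real) \<Rightarrow> nat \<Rightarrow> nat" where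
  "rankJ n Z Mo Yo i = (\<Sum>j\<in>Jset n Z Mo. psi i j (Yo i) (Yo j))"

definition JL :: "nat \<Rightarrow> nat set \<Rightarrow> (nat \<Rightarrow> bool) \<Rightarrow> (nat \<Rightarrow> real) \<Rightarrow> nat \<Rightarrow> nat set" where
  "JL n Z Mo Yo L = {i \<in> Jset n Z Mo. rankJ n Z Mo Yo i > card (Jset n Z Mo) - L}"

definition xi :: "nat \<Rightarrow> nat \<Rightarrow> real \<Rightarrow> nat set \<Rightarrow> (nat \<Rightarrow> bool) \<Rightarrow> (nat \<Rightarrow> real) \<Rightarrow> nat \<Rightarrow> real \<Rightarrow> nat \<Rightarrow> real" where
  "xi n n1 kap Z Mo Yo k c i =
     (if i \<in> JL n Z Mo Yo (min (n1 - k) (card (Jset n Z Mo)))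
      then Max (Yo ` Jset n Z Mo) - Min (Yo ` Cobs n Z Mo) + kap
      else c)"

definition pval :: "bool \<Rightarrow> (nat \<Rightarrow> real) \<Rightarrow> nat \<Rightarrow> nat \<Rightarrow> (nat \<Rightarrow> real) \<Rightarrow> mech \<Rightarrow> real
     \<Rightarrow> (nat \<Rightarrow> bool) \<Rightarrow> (nat \<Rightarrow> real) \<Rightarrow> nat set \<Rightarrow> nat \<Rightarrow> real \<Rightarrow> real" where
  "pval v phi n n1 y0 m kap Mo Yo Z k c =
     Gfun v phi n n1 y0 (tstat v phi n Z (Ytil m Z Mo Yo (xi n n1 kap Z Mo Yo k c)))"

text \<open>k-th smallest (1-based, with multiplicity) of the treated effects.\<close>
definition tau_sorted :: "(nat \<Rightarrow> real) \<Rightarrow> nat set \<Rightarrow> nat \<Rightarrow> real" where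
  "tau_sorted tau Z k = sort (map tau (sorted_list_of_set Z)) ! (k - 1)"

end

(* Let W be the control outcome vector in which every missing control outcome is imputed by
   the extreme value the mechanism prescribes (ctrl_imputed).  W does not depend on the
   assignment, and the null distribution G of a rank statistic does not depend on the scores,
   so G (t (Z, W)) is a randomization p-value: it is at most alpha with probability at most alpha.
   Outside that event fix k and the shift c = tau_t(k).  The units of J_L are shifted below
   every observed control outcome, at most n1 - k treated units have an effect above tau_t(k),
   and every other imputed treated score lies below the corresponding entry of W; comparing the
   empirical distributions of the control ranks gives t (Z, Ytil) <= t (Z, W).  Since G is
   antitone, the p-value at tau_t(k) then exceeds alpha for all k at once.  Finally the p-value
   is nondecreasing in c, so every prediction set is an upper ray. *)

theory Submission
  imports Defs "HOL-Library.Product_Lexorder"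
begin

section \<open>Ranks with ties broken by the unit index\<close>

declare less_eq_prod_simp [simp del] less_prod_simp [simp del]

definition lex_rank :: "nat set \<Rightarrow> (nat \<Rightarrow> 'a::linorder) \<Rightarrow> nat \<Rightarrow> nat" where
  "lex_rank S y i = card {j \<in> S. (y j, j) \<le> (y i, i)}"

lemma lex_rank_mono:
  assumes "finite S" "(y l, l) \<le> (y i, i)"
  shows "lex_rank S y l \<le> lex_rank S y i"
  unfolding lex_rank_def using assms by (intro card_mono) (auto intro: order.trans)

lemma lex_rank_le_card: "finite S \<Longrightarrow> lex_rank S y i \<le> card S"
  unfolding lex_rank_def by (intro card_mono) auto

lemma lex_rank_pos: "finite S \<Longrightarrow> i \<in> S \<Longrightarrow> 0 < lex_rank S y i"
  unfolding lex_rank_def by (subst card_gt_0_iff) auto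

lemma lex_rank_le_iff:
  assumes "finite S" "i \<in> S" "j \<in> S"
  shows "lex_rank S y j \<le> lex_rank S y i \<longleftrightarrow> (y j, j) \<le> (y i, i)"
proof
  assume le: "lex_rank S y j \<le> lex_rank S y i"
  show "(y j, j) \<le> (y i, i)"
  proof (rule ccontr)
    assume "\<not> (y j, j) \<le> (y i, i)"
    then have "{l \<in> S. (y l, l) \<le> (y i, i)} \<subset> {l \<in> S. (y l, l) \<le> (y j, j)}"
      using assms by (auto intro: order.trans)
    then have "lex_rank S y i < lex_rank S y j"
      unfolding lex_rank_def using assms(1) by (intro psubset_card_mono) auto
    with le show False by simp
  qed
qed (rule lex_rank_mono[OF assms(1)])

lemma bij_betw_lex_rank:
  assumes "finite S"
  shows "bij_betw (lex_rank S y) S {1..card S}"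
proof -
  have inj: "inj_on (lex_rank S y) S"
  proof (rule inj_onI)
    fix i j assume ij: "i \<in> S" "j \<in> S" and eq: "lex_rank S y i = lex_rank S y j"
    then have "(y i, i) = (y j, j)"
      using lex_rank_le_iff[OF assms ij, of y] lex_rank_le_iff[OF assms ij(2,1), of y] by simp
    then show "i = j" by simp
  qed
  have "lex_rank S y ` S \<subseteq> {1..card S}"
    using assms lex_rank_pos lex_rank_le_card by (fastforce simp: Suc_le_eq)
  moreover have "card (lex_rank S y ` S) = card {1..card S}"
    using card_image[OF inj] by simp
  ultimately have "lex_rank S y ` S = {1..card S}"
    by (intro card_subset_eq) auto
  with inj show ?thesis
    unfolding bij_betw_def by blast
qed

lemma card_lex_rank_filter:
  assumes "finite S"
  shows "card {i \<in> S. P (lex_rank S y i)} = card {r \<in> {1..card S}. P r}"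
proof -
  have b: "bij_betw (lex_rank S y) S {1..card S}" by (rule bij_betw_lex_rank[OF assms])
  then have "inj_on (lex_rank S y) {i \<in> S. P (lex_rank S y i)}"
    unfolding bij_betw_def by (blast intro: inj_on_subset)
  then have "card {i \<in> S. P (lex_rank S y i)} = card (lex_rank S y ` {i \<in> S. P (lex_rank S y i)})"
    by (rule card_image[symmetric])
  also have "lex_rank S y ` {i \<in> S. P (lex_rank S y i)} = {r \<in> lex_rank S y ` S. P r}"
    by blast
  finally show ?thesis
    using b by (simp add: bij_betw_def)
qed

lemma lex_rank_Un:
  assumes "finite S" "finite T" "S \<inter> T = {}"
  shows "lex_rank (S \<union> T) y i = lex_rank S y i + lex_rank T y i"
proof -
  have "{j \<in> S \<union> T. (y j, j) \<le> (y i, i)} = {j \<in> S. (y j, j) \<le> (y i, i)} \<union> {j \<in> T. (y j, j) \<le> (y i, i)}"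
    by blast
  then show ?thesis
    unfolding lex_rank_def using assms by (simp add: card_Un_disjoint disjoint_iff)
qed

lemma lex_rank_split:
  assumes "Z \<subseteq> {..<n}"
  shows "lex_rank {..<n} y i = lex_rank Z y i + lex_rank ({..<n} - Z) y i"
proof -
  have "lex_rank (Z \<union> ({..<n} - Z)) y i = lex_rank Z y i + lex_rank ({..<n} - Z) y i"
    using finite_subset[OF assms finite_lessThan] by (intro lex_rank_Un) auto
  moreover have "Z \<union> ({..<n} - Z) = {..<n}" using assms by blast
  ultimately show ?thesis by simp
qed

lemma lex_rank_down_closed:
  assumes "D \<subseteq> S" "\<And>l d. l \<in> S \<Longrightarrow> d \<in> D \<Longrightarrow> (y l, l) \<le> (y d, d) \<Longrightarrow> l \<in> D" "i \<in> D"
  shows "lex_rank S y i = lex_rank D y i"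
  unfolding lex_rank_def using assms by (intro arg_cong[where f = card]) blast

lemma lex_rank_image:
  assumes "inj_on \<sigma> S" "T \<subseteq> S" "i \<in> S"
    and "\<And>i j. i \<in> S \<Longrightarrow> j \<in> S \<Longrightarrow> (u (\<sigma> j), \<sigma> j) \<le> (u (\<sigma> i), \<sigma> i) \<longleftrightarrow> (w j, j) \<le> (w i, i)"
  shows "lex_rank (\<sigma> ` T) u (\<sigma> i) = lex_rank T w i"
proof -
  have "{j \<in> \<sigma> ` T. (u j, j) \<le> (u (\<sigma> i), \<sigma> i)} = \<sigma> ` {j \<in> T. (w j, j) \<le> (w i, i)}"
    using assms(2-4) by auto
  moreover have "inj_on \<sigma> {j \<in> T. (w j, j) \<le> (w i, i)}"
    using assms(2) by (intro inj_on_subset[OF assms(1)]) auto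
  ultimately show ?thesis
    unfolding lex_rank_def by (simp add: card_image)
qed

lemma lex_rank_le_of_agree:
  assumes "finite C" "\<And>j. j \<in> C \<Longrightarrow> y' j = y j"
    and "\<And>j. j \<in> C \<Longrightarrow> (y j, j) \<le> (y' i, i) \<Longrightarrow> (y j, j) \<le> (y l, l)"
  shows "lex_rank C y' i \<le> lex_rank C y l"
  unfolding lex_rank_def using assms by (intro card_mono) auto

lemma psi_eq_lex: "psi i j (a::'a::linorder) b = (if (b, j) \<le> (a, i) then 1 else 0)"
  unfolding psi_def by (auto simp: less_eq_prod_def)

lemma tstat_eq_sum_lex_rank:
  assumes "z \<subseteq> {..<n}"
  shows "tstat v phi n z y = (\<Sum>i\<in>z. phi (lex_rank ({..<n} - (if v then {} else z)) y i))"
proof -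
  have inner: "(\<Sum>j<n. if j \<notin> S then psi i j (y i) (y j) else 0) = lex_rank ({..<n} - S) y i"
    for S i
    unfolding lex_rank_def psi_eq_lex by (simp add: sum.If_cases Int_def conj_commute set_diff_eq)
  have "tstat v phi n z y
      = (\<Sum>i<n. if i \<in> z then phi (lex_rank ({..<n} - (if v then {} else z)) y i) else 0)"
    unfolding tstat_def using inner[of "{}"] inner[of z] by (cases v) (simp_all cong: if_cong)
  also have "\<dots> = (\<Sum>i\<in>z. phi (lex_rank ({..<n} - (if v then {} else z)) y i))"
    using assms by (simp add: sum.If_cases Int_absorb1)
  finally show ?thesis .
qed

section \<open>Stochastic order of rank vectors\<close>

definition stoch_le :: "'a set \<Rightarrow> ('a \<Rightarrow> nat) \<Rightarrow> ('a \<Rightarrow> nat) \<Rightarrow> bool" where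
  "stoch_le Z f g \<longleftrightarrow> (\<forall>x. card {i \<in> Z. g i \<le> x} \<le> card {i \<in> Z. f i \<le> x})"

lemma stoch_le_pointwise:
  assumes "finite Z" "\<And>i. i \<in> Z \<Longrightarrow> f i \<le> g i"
  shows "stoch_le Z f g"
  unfolding stoch_le_def using assms by (auto intro!: card_mono intro: order.trans)

lemma telescope_below:
  fixes phi :: "nat \<Rightarrow> real"
  assumes "r \<le> N"
  shows "phi r = phi 0 + (\<Sum>s<N. if s < r then phi (Suc s) - phi s else 0)"
proof -
  have "(\<Sum>s<N. if s < r then phi (Suc s) - phi s else 0) = (\<Sum>s<r. phi (Suc s) - phi s)"
    using assms by (simp add: sum.If_cases Int_absorb1 lessThan_def subset_eq)
  also have "\<dots> = phi r - phi 0" by (rule sum_lessThan_telescope)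
  finally show ?thesis by simp
qed

lemma sum_layer_cake:
  fixes phi :: "nat \<Rightarrow> real"
  assumes "finite Z" "\<And>i. i \<in> Z \<Longrightarrow> h i \<le> N"
  shows "(\<Sum>i\<in>Z. phi (h i))
       = real (card Z) * phi 0 + (\<Sum>s<N. (phi (Suc s) - phi s) * real (card {i \<in> Z. s < h i}))"
proof -
  have "(\<Sum>i\<in>Z. phi (h i)) = (\<Sum>i\<in>Z. phi 0 + (\<Sum>s<N. if s < h i then phi (Suc s) - phi s else 0))"
    using assms(2) telescope_below by (intro sum.cong) auto
  also have "\<dots> = real (card Z) * phi 0 + (\<Sum>s<N. \<Sum>i\<in>Z. if s < h i then phi (Suc s) - phi s else 0)"
    by (simp add: sum.distrib sum.swap[of _ Z])
  also have "(\<Sum>s<N. \<Sum>i\<in>Z. if s < h i then phi (Suc s) - phi s else 0)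
           = (\<Sum>s<N. (phi (Suc s) - phi s) * real (card {i \<in> Z. s < h i}))"
    using assms(1) by (simp add: sum.If_cases Int_def conj_commute mult.commute)
  finally show ?thesis .
qed

lemma sum_mono_stoch_le:
  fixes phi :: "nat \<Rightarrow> real"
  assumes "mono phi" "finite Z" "stoch_le Z f g"
  shows "(\<Sum>i\<in>Z. phi (f i)) \<le> (\<Sum>i\<in>Z. phi (g i))"
proof -
  define N where "N = (\<Sum>i\<in>Z. f i + g i)"
  have bound: "f i \<le> N" "g i \<le> N" if "i \<in> Z" for i
    using member_le_sum[OF that, of "\<lambda>i. f i + g i"] assms(2) unfolding N_def by simp_all
  have above: "card {i \<in> Z. s < h i} = card Z - card {i \<in> Z. h i \<le> s}" for h :: "'a \<Rightarrow> nat" and s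
  proof -
    have "{i \<in> Z. s < h i} = Z - {i \<in> Z. h i \<le> s}" by auto
    then show ?thesis using assms(2) by (simp add: card_Diff_subset)
  qed
  have "card {i \<in> Z. s < f i} \<le> card {i \<in> Z. s < g i}" for s
    using assms(3) unfolding above stoch_le_def by (simp add: diff_le_mono2)
  moreover have "phi s \<le> phi (Suc s)" for s
    using assms(1) by (simp add: monoD)
  ultimately have "(\<Sum>s<N. (phi (Suc s) - phi s) * real (card {i \<in> Z. s < f i}))
                 \<le> (\<Sum>s<N. (phi (Suc s) - phi s) * real (card {i \<in> Z. s < g i}))"
    by (intro sum_mono mult_left_mono) simp_all
  then show ?thesis
    using sum_layer_cake[OF assms(2), of f N phi] sum_layer_cake[OF assms(2), of g N phi] bound
    by simp
qed

lemma card_filter_split: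
  assumes "finite Z" "U \<subseteq> Z"
  shows "card {i \<in> Z. P i} = card {i \<in> Z - U. P i} + card {i \<in> U. P i}"
proof -
  have "{i \<in> Z. P i} = {i \<in> Z - U. P i} \<union> {i \<in> U. P i}" using assms(2) by blast
  then show ?thesis using assms by (simp add: card_Un_disjoint finite_subset disjoint_iff)
qed

lemma card_le_block_swap:
  fixes f g :: "'a \<Rightarrow> nat"
  assumes "finite A" "finite B" "card B \<le> card A"
    and low: "\<And>i l. i \<in> A \<Longrightarrow> l \<in> A \<union> B \<Longrightarrow> f i \<le> g l"
    and swap: "\<And>i l. i \<in> B - A \<Longrightarrow> l \<in> A - B \<Longrightarrow> f i \<le> g l"
  shows "card {l \<in> A \<union> B. g l \<le> x} \<le> card {i \<in> A \<union> B. f i \<le> x}"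
proof (cases "\<exists>l \<in> A \<union> B. g l \<le> x")
  case False
  then have "{l \<in> A \<union> B. g l \<le> x} = {}" by blast
  then show ?thesis by (simp only: card.empty zero_le)
next
  case True
  then obtain l0 where l0: "l0 \<in> A \<union> B" "g l0 \<le> x" by blast
  have A_low: "A \<subseteq> {i \<in> A \<union> B. f i \<le> x}"
  proof
    fix i assume "i \<in> A"
    then show "i \<in> {i \<in> A \<union> B. f i \<le> x}" using low[OF _ l0(1), of i] l0(2) by simp
  qed
  show ?thesis
  proof (cases "B - A \<subseteq> {i. f i \<le> x}")
    case True
    then have "A \<union> B \<subseteq> {i \<in> A \<union> B. f i \<le> x}" using A_low by blast
    then show ?thesis using assms(1,2) by (intro card_mono) auto
  next
    case False
    then obtain i0 where i0: "i0 \<in> B - A" "\<not> f i0 \<le> x" by blast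
    have "{l \<in> A \<union> B. g l \<le> x} \<subseteq> B"
    proof
      fix l assume l: "l \<in> {l \<in> A \<union> B. g l \<le> x}"
      show "l \<in> B"
      proof (rule ccontr)
        assume "l \<notin> B"
        then have "f i0 \<le> g l" using swap[OF i0(1)] l by simp
        then show False using l i0(2) by simp
      qed
    qed
    then have "card {l \<in> A \<union> B. g l \<le> x} \<le> card B" using assms(2) by (rule card_mono[rotated])
    also have "\<dots> \<le> card A" by fact
    also have "\<dots> \<le> card {i \<in> A \<union> B. f i \<le> x}"
      using A_low assms(1,2) by (intro card_mono) auto
    finally show ?thesis .
  qed
qed

lemma stoch_le_block_swap:
  fixes f g :: "'a \<Rightarrow> nat"
  assumes "finite Z" "A \<subseteq> Z" "B \<subseteq> Z" "card B \<le> card A"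
    and "\<And>i. i \<in> Z - (A \<union> B) \<Longrightarrow> f i \<le> g i"
    and "\<And>i l. i \<in> A \<Longrightarrow> l \<in> A \<union> B \<Longrightarrow> f i \<le> g l"
    and "\<And>i l. i \<in> B - A \<Longrightarrow> l \<in> A - B \<Longrightarrow> f i \<le> g l"
  shows "stoch_le Z f g"
  unfolding stoch_le_def
proof
  fix x
  have U: "A \<union> B \<subseteq> Z" using assms(2,3) by blast
  have fin: "finite A" "finite B" using assms(1-3) finite_subset by auto
  have "card {i \<in> Z - (A \<union> B). g i \<le> x} \<le> card {i \<in> Z - (A \<union> B). f i \<le> x}"
    using assms(1,5) by (intro card_mono) (auto intro: order.trans)
  moreover have "card {l \<in> A \<union> B. g l \<le> x} \<le> card {i \<in> A \<union> B. f i \<le> x}"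
    using card_le_block_swap[OF fin assms(4,6,7)] .
  ultimately show "card {i \<in> Z. g i \<le> x} \<le> card {i \<in> Z. f i \<le> x}"
    unfolding card_filter_split[OF assms(1) U, of "\<lambda>i. g i \<le> x"]
      card_filter_split[OF assms(1) U, of "\<lambda>i. f i \<le> x"]
    by (rule add_mono)
qed

(* The rank of i among all units is its rank within Z plus its control rank (lex_rank_split),
   and the units of Z of rank at most m form an initial segment of Z. *)
lemma card_rank_le_ctrl_bound:
  assumes "Z \<subseteq> {..<n}"
  obtains b where "card {i \<in> Z. lex_rank {..<n} y i \<le> m} + b \<le> m"
    and "card {i \<in> Z. lex_rank {..<n} y i \<le> m} \<le> card {i \<in> Z. lex_rank ({..<n} - Z) y i \<le> b}"
proof (cases "{i \<in> Z. lex_rank {..<n} y i \<le> m} = {}")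
  case True
  then have a0: "card {i \<in> Z. lex_rank {..<n} y i \<le> m} = 0" by (metis card.empty)
  show ?thesis by (rule that[of 0]) (simp_all only: a0 add_0_right zero_le)
next
  case False
  define D where "D = {i \<in> Z. lex_rank {..<n} y i \<le> m}"
  have finD: "finite D" unfolding D_def using finite_subset[OF assms finite_lessThan] by simp
  have "0 < card D"
    using False finD card_gt_0_iff unfolding D_def by blast
  moreover have "lex_rank D y ` D = {1..card D}"
    using bij_betw_lex_rank[OF finD, of y] by (simp add: bij_betw_def)
  ultimately have "card D \<in> lex_rank D y ` D" by simp
  then obtain t where t: "t \<in> D" "lex_rank D y t = card D" by auto
  have below_t: "(y i, i) \<le> (y t, t)" if "i \<in> D" for i
    using lex_rank_le_iff[OF finD t(1) that, of y] t lex_rank_le_card[OF finD, of y i] by simp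
  have down: "l \<in> D" if "l \<in> Z" "d \<in> D" "(y l, l) \<le> (y d, d)" for l d
    using that lex_rank_mono[of "{..<n}" y l d] unfolding D_def by fastforce
  have "lex_rank Z y t = lex_rank D y t"
    by (rule lex_rank_down_closed) (use down t D_def in auto)
  then have "lex_rank {..<n} y t = card D + lex_rank ({..<n} - Z) y t"
    using lex_rank_split[OF assms, of y t] t(2) by simp
  moreover have "lex_rank {..<n} y t \<le> m" using t D_def by simp
  moreover have "D \<subseteq> {i \<in> Z. lex_rank ({..<n} - Z) y i \<le> lex_rank ({..<n} - Z) y t}"
    using below_t lex_rank_mono[of "{..<n} - Z" y] unfolding D_def by auto
  then have "card D \<le> card {i \<in> Z. lex_rank ({..<n} - Z) y i \<le> lex_rank ({..<n} - Z) y t}"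
    using finite_subset[OF assms finite_lessThan] by (intro card_mono) auto
  ultimately show ?thesis
    using that[of "lex_rank ({..<n} - Z) y t"] unfolding D_def by simp
qed

lemma card_rank_ge_of_ctrl:
  assumes "Z \<subseteq> {..<n}" "a \<le> card {i \<in> Z. lex_rank ({..<n} - Z) y i \<le> b}"
  shows "a \<le> card {i \<in> Z. lex_rank {..<n} y i \<le> a + b}"
proof -
  define E where "E = {i \<in> Z. lex_rank ({..<n} - Z) y i \<le> b}"
  have finE: "finite E" unfolding E_def using finite_subset[OF assms(1) finite_lessThan] by simp
  have down: "l \<in> E" if "l \<in> Z" "d \<in> E" "(y l, l) \<le> (y d, d)" for l d
    using that lex_rank_mono[of "{..<n} - Z" y l d] unfolding E_def by fastforce
  have "card {i \<in> E. lex_rank E y i \<le> a} = card {r \<in> {1..card E}. r \<le> a}"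
    by (rule card_lex_rank_filter[OF finE])
  also have "{r \<in> {1..card E}. r \<le> a} = {1..a}"
    using assms(2) unfolding E_def by auto
  finally have "card {i \<in> E. lex_rank E y i \<le> a} = a" by simp
  moreover have "{i \<in> E. lex_rank E y i \<le> a} \<subseteq> {i \<in> Z. lex_rank {..<n} y i \<le> a + b}"
  proof
    fix i assume i: "i \<in> {i \<in> E. lex_rank E y i \<le> a}"
    have "lex_rank Z y i = lex_rank E y i"
      by (rule lex_rank_down_closed) (use down i E_def in auto)
    then have "lex_rank {..<n} y i = lex_rank E y i + lex_rank ({..<n} - Z) y i"
      using lex_rank_split[OF assms(1), of y i] by simp
    then show "i \<in> {i \<in> Z. lex_rank {..<n} y i \<le> a + b}"
      using i unfolding E_def by auto
  qed
  then have "card {i \<in> E. lex_rank E y i \<le> a} \<le> card {i \<in> Z. lex_rank {..<n} y i \<le> a + b}"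
    using finite_subset[OF assms(1) finite_lessThan] by (intro card_mono) auto
  ultimately show ?thesis by simp
qed

lemma stoch_le_rank_of_ctrl_rank:
  assumes "Z \<subseteq> {..<n}" "stoch_le Z (lex_rank ({..<n} - Z) y') (lex_rank ({..<n} - Z) y)"
  shows "stoch_le Z (lex_rank {..<n} y') (lex_rank {..<n} y)"
  unfolding stoch_le_def
proof
  fix m
  let ?a = "card {i \<in> Z. lex_rank {..<n} y i \<le> m}"
  obtain b where b: "?a + b \<le> m" "?a \<le> card {i \<in> Z. lex_rank ({..<n} - Z) y i \<le> b}"
    using card_rank_le_ctrl_bound[OF assms(1)] .
  then have "?a \<le> card {i \<in> Z. lex_rank ({..<n} - Z) y' i \<le> b}"
    using assms(2) unfolding stoch_le_def by (meson order.trans)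
  then have "?a \<le> card {i \<in> Z. lex_rank {..<n} y' i \<le> ?a + b}"
    by (rule card_rank_ge_of_ctrl[OF assms(1)])
  also have "\<dots> \<le> card {i \<in> Z. lex_rank {..<n} y' i \<le> m}"
    using b(1) finite_subset[OF assms(1) finite_lessThan] by (intro card_mono) auto
  finally show "?a \<le> card {i \<in> Z. lex_rank {..<n} y' i \<le> m}" .
qed

lemma tstat_mono_stoch_le:
  assumes "Z \<subseteq> {..<n}" "mono phi"
    and "stoch_le Z (lex_rank ({..<n} - Z) y') (lex_rank ({..<n} - Z) y)"
  shows "tstat v phi n Z y' \<le> tstat v phi n Z y"
proof -
  have "stoch_le Z (lex_rank ({..<n} - (if v then {} else Z)) y') (lex_rank ({..<n} - (if v then {} else Z)) y)"
    using assms stoch_le_rank_of_ctrl_rank[OF assms(1,3)] by simp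
  then show ?thesis
    unfolding tstat_eq_sum_lex_rank[OF assms(1)]
    by (rule sum_mono_stoch_le[OF assms(2) finite_subset[OF assms(1) finite_lessThan]])
qed

section \<open>The randomization distribution\<close>

lemma lex_order_matching_perm:
  fixes u w :: "nat \<Rightarrow> 'a::linorder"
  obtains \<sigma> where "bij_betw \<sigma> {..<n} {..<n}"
    and "\<And>i j. i < n \<Longrightarrow> j < n \<Longrightarrow> (u (\<sigma> j), \<sigma> j) \<le> (u (\<sigma> i), \<sigma> i) \<longleftrightarrow> (w j, j) \<le> (w i, i)"
proof -
  have bu: "bij_betw (lex_rank {..<n} u) {..<n} {1..n}"
    and bw: "bij_betw (lex_rank {..<n} w) {..<n} {1..n}"
    using bij_betw_lex_rank[of "{..<n}"] by simp_all
  define \<sigma> where "\<sigma> = inv_into {..<n} (lex_rank {..<n} u) \<circ> lex_rank {..<n} w"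
  have b: "bij_betw \<sigma> {..<n} {..<n}"
    unfolding \<sigma>_def by (rule bij_betw_trans[OF bw bij_betw_inv_into[OF bu]])
  have rank_\<sigma>: "lex_rank {..<n} u (\<sigma> i) = lex_rank {..<n} w i" if "i < n" for i
  proof -
    have "lex_rank {..<n} w i \<in> lex_rank {..<n} u ` {..<n}"
      using bu bw that unfolding bij_betw_def by blast
    then show ?thesis unfolding \<sigma>_def by (simp add: f_inv_into_f)
  qed
  have "(u (\<sigma> j), \<sigma> j) \<le> (u (\<sigma> i), \<sigma> i) \<longleftrightarrow> (w j, j) \<le> (w i, i)" if "i < n" "j < n" for i j
  proof -
    have "\<sigma> i < n" "\<sigma> j < n" using b that by (auto simp: bij_betw_def)
    then show ?thesis
      using that lex_rank_le_iff[of "{..<n}" "\<sigma> i" "\<sigma> j" u] lex_rank_le_iff[of "{..<n}" i j w]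
      by (simp add: rank_\<sigma>)
  qed
  with b show ?thesis using that by blast
qed

lemma tstat_perm:
  assumes "bij_betw \<sigma> {..<n} {..<n}"
    and "\<And>i j. i < n \<Longrightarrow> j < n \<Longrightarrow> (u (\<sigma> j), \<sigma> j) \<le> (u (\<sigma> i), \<sigma> i) \<longleftrightarrow> (w j, j) \<le> (w i, i)"
    and "A \<subseteq> {..<n}"
  shows "tstat v phi n (\<sigma> ` A) u = tstat v phi n A w"
proof -
  have inj: "inj_on \<sigma> {..<n}" and img: "\<sigma> ` {..<n} = {..<n}"
    using assms(1) by (simp_all add: bij_betw_def)
  let ?R = "\<lambda>B. {..<n} - (if v then {} else B)"
  have "?R (\<sigma> ` A) = \<sigma> ` ?R A"
    using inj_on_image_set_diff[OF inj, of "{..<n}"] img assms(3) by auto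
  then have "lex_rank (?R (\<sigma> ` A)) u (\<sigma> i) = lex_rank (?R A) w i" if "i \<in> A" for i
    using lex_rank_image[OF inj, of "?R A" i u w] assms(2,3) that by auto
  moreover have "\<sigma> ` A \<subseteq> {..<n}" using img assms(3) by blast
  moreover have "inj_on \<sigma> A" using inj assms(3) by (rule inj_on_subset)
  ultimately show ?thesis
    using assms(3) by (simp add: tstat_eq_sum_lex_rank sum.reindex)
qed

lemma finite_cre: "finite (cre n n1)"
  unfolding cre_def by (rule finite_subset[of _ "Pow {..<n}"]) auto

lemma card_cre: "card (cre n n1) = n choose n1"
  unfolding cre_def using n_subsets[of "{..<n}" n1] by simp

lemma bij_betw_image_cre:
  assumes "bij_betw \<sigma> {..<n} {..<n}"
  shows "bij_betw (image \<sigma>) (cre n n1) (cre n n1)"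
proof -
  have inj: "inj_on \<sigma> {..<n}" and img: "\<sigma> ` {..<n} = {..<n}"
    using assms by (simp_all add: bij_betw_def)
  have inj_cre: "inj_on (image \<sigma>) (cre n n1)"
    using bij_betw_imp_inj_on[OF bij_betw_Pow[OF assms]] by (rule inj_on_subset) (auto simp: cre_def)
  have "image \<sigma> ` cre n n1 \<subseteq> cre n n1"
    using img by (auto simp: cre_def card_image inj_on_subset[OF inj])
  moreover have "card (image \<sigma> ` cre n n1) = card (cre n n1)"
    using card_image[OF inj_cre] .
  ultimately have "image \<sigma> ` cre n n1 = cre n n1"
    using finite_cre by (intro card_subset_eq) auto
  with inj_cre show ?thesis unfolding bij_betw_def ..
qed

lemma prob_cre_cong:
  "(\<And>Z. Z \<in> cre n n1 \<Longrightarrow> P Z \<longleftrightarrow> Q Z) \<Longrightarrow> prob_cre n n1 P = prob_cre n n1 Q"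
  unfolding prob_cre_def by (metis (mono_tags, lifting) Collect_cong)

lemma prob_cre_image:
  assumes "bij_betw \<sigma> {..<n} {..<n}"
  shows "prob_cre n n1 (\<lambda>A. P (\<sigma> ` A)) = prob_cre n n1 P"
proof -
  have inj: "inj_on (image \<sigma>) (cre n n1)" and img: "image \<sigma> ` cre n n1 = cre n n1"
    using bij_betw_image_cre[OF assms] unfolding bij_betw_def by blast+
  have "image \<sigma> ` {A \<in> cre n n1. P (\<sigma> ` A)} = {B \<in> image \<sigma> ` cre n n1. P B}"
    by blast
  moreover have "inj_on (image \<sigma>) {A \<in> cre n n1. P (\<sigma> ` A)}"
    using inj by (rule inj_on_subset) blast
  ultimately have "card {A \<in> cre n n1. P (\<sigma> ` A)} = card {B \<in> cre n n1. P B}"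
    using img card_image by metis
  then show ?thesis
    unfolding prob_cre_def by simp
qed

lemma Gfun_eq_prob_tstat:
  fixes w :: "nat \<Rightarrow> ereal"
  shows "Gfun v phi n n1 y0 c = prob_cre n n1 (\<lambda>A. c \<le> tstat v phi n A w)"
proof -
  let ?u = "\<lambda>i. ereal (y0 i)"
  obtain \<sigma> where b: "bij_betw \<sigma> {..<n} {..<n}"
    and \<sigma>: "\<And>i j. i < n \<Longrightarrow> j < n \<Longrightarrow> (?u (\<sigma> j), \<sigma> j) \<le> (?u (\<sigma> i), \<sigma> i) \<longleftrightarrow> (w j, j) \<le> (w i, i)"
    using lex_order_matching_perm[where n = n and u = ?u and w = w] by blast
  have "Gfun v phi n n1 y0 c = prob_cre n n1 (\<lambda>A. c \<le> tstat v phi n (\<sigma> ` A) ?u)"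
    unfolding Gfun_def by (rule prob_cre_image[OF b, symmetric])
  also have "\<dots> = prob_cre n n1 (\<lambda>A. c \<le> tstat v phi n A w)"
    by (rule prob_cre_cong) (simp add: tstat_perm[OF b \<sigma>] cre_def)
  finally show ?thesis .
qed

lemma prob_cre_mono:
  "(\<And>Z. Z \<in> cre n n1 \<Longrightarrow> P Z \<Longrightarrow> Q Z) \<Longrightarrow> prob_cre n n1 P \<le> prob_cre n n1 Q"
  unfolding prob_cre_def using finite_cre by (intro divide_right_mono of_nat_mono card_mono) auto

lemma Gfun_antimono: "s \<le> t \<Longrightarrow> Gfun v phi n n1 y0 t \<le> Gfun v phi n n1 y0 s"
  unfolding Gfun_def by (rule prob_cre_mono) auto

lemma prob_cre_compl_le:
  assumes "n1 \<le> n" "\<And>Z. Z \<in> cre n n1 \<Longrightarrow> \<not> Q Z \<Longrightarrow> P Z"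
  shows "1 - prob_cre n n1 Q \<le> prob_cre n n1 P"
proof -
  let ?N = "card (cre n n1)"
  have "?N \<le> card ({Z \<in> cre n n1. P Z} \<union> {Z \<in> cre n n1. Q Z})"
    using assms(2) finite_cre by (intro card_mono) auto
  also have "\<dots> \<le> card {Z \<in> cre n n1. P Z} + card {Z \<in> cre n n1. Q Z}"
    by (rule card_Un_le)
  finally have "real ?N \<le> real (card {Z \<in> cre n n1. P Z}) + real (card {Z \<in> cre n n1. Q Z})"
    by linarith
  moreover have "0 < ?N" using assms(1) by (simp add: card_cre)
  ultimately have "1 \<le> real (card {Z \<in> cre n n1. P Z}) / ?N + real (card {Z \<in> cre n n1. Q Z}) / ?N"
    by (simp add: add_divide_distrib[symmetric] le_divide_eq)
  then show ?thesis
    unfolding prob_cre_def by simp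
qed

lemma prob_cre_pvalue_le:
  fixes X :: "nat set \<Rightarrow> real"
  assumes "0 \<le> alpha"
  shows "prob_cre n n1 (\<lambda>Z. prob_cre n n1 (\<lambda>A. X Z \<le> X A) \<le> alpha) \<le> alpha"
proof -
  define E where "E = {Z \<in> cre n n1. prob_cre n n1 (\<lambda>A. X Z \<le> X A) \<le> alpha}"
  have prob_E: "prob_cre n n1 (\<lambda>Z. prob_cre n n1 (\<lambda>A. X Z \<le> X A) \<le> alpha) = card E / card (cre n n1)"
    unfolding E_def prob_cre_def ..
  show ?thesis
  proof (cases "E = {}")
    case True
    then show ?thesis using assms prob_E by simp
  next
    case False
    have fin: "finite E" unfolding E_def using finite_cre by simp
    then have "Min (X ` E) \<in> X ` E" using False by (intro Min_in) auto
    then obtain Z0 where Z0: "Z0 \<in> E" "X Z0 = Min (X ` E)" by (auto simp: eq_commute)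
    have Z0_min: "X Z0 \<le> X Z" if "Z \<in> E" for Z
      unfolding Z0(2) using fin that by simp
    have "E = {A \<in> cre n n1. X Z0 \<le> X A}"
    proof (intro equalityI subsetI)
      fix A assume A: "A \<in> {A \<in> cre n n1. X Z0 \<le> X A}"
      then have "prob_cre n n1 (\<lambda>B. X A \<le> X B) \<le> prob_cre n n1 (\<lambda>B. X Z0 \<le> X B)"
        by (intro prob_cre_mono) auto
      with A Z0(1) show "A \<in> E" unfolding E_def by auto
    qed (use Z0_min E_def in auto)
    then have "card E / card (cre n n1) = prob_cre n n1 (\<lambda>A. X Z0 \<le> X A)"
      unfolding prob_cre_def by simp
    also have "\<dots> \<le> alpha" using Z0(1) E_def by simp
    finally show ?thesis unfolding prob_E .
  qed
qed

section \<open>Imputation at the k-th smallest treated effect\<close>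

lemma card_gt_tau_sorted:
  assumes "finite Z" "card Z = n1" "k \<in> {1..n1}"
  shows "card {i \<in> Z. tau_sorted tau Z k < tau i} \<le> n1 - k"
proof -
  let ?l = "sorted_list_of_set Z"
  define ys where "ys = sort (map tau ?l)"
  define c where "c = ys ! (k - 1)"
  have len: "length ys = n1" using assms by (simp add: ys_def)
  have "card {i \<in> Z. c < tau i} = length (filter (\<lambda>i. c < tau i) ?l)"
    using assms(1) distinct_length_filter[OF distinct_sorted_list_of_set, of "\<lambda>i. c < tau i" Z]
    by (simp add: Int_def conj_commute)
  also have "\<dots> = length (filter (\<lambda>x. c < x) ys)"
    unfolding ys_def by (simp add: filter_map comp_def filter_sort)
  also have "\<dots> = card {t. t < n1 \<and> c < ys ! t}" by (simp add: length_filter_conv_card len)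
  also have "\<dots> \<le> card {k..<n1}"
  proof (rule card_mono)
    show "{t. t < n1 \<and> c < ys ! t} \<subseteq> {k..<n1}"
    proof (intro subsetI)
      fix t assume t: "t \<in> {t. t < n1 \<and> c < ys ! t}"
      have "\<not> t \<le> k - 1"
      proof
        assume "t \<le> k - 1"
        then have "ys ! t \<le> c"
          unfolding c_def ys_def using assms(3) len by (intro sorted_nth_mono) (auto simp: ys_def)
        then show False using t by simp
      qed
      then show "t \<in> {k..<n1}" using t by simp
    qed
  qed simp
  finally show ?thesis by (simp add: tau_sorted_def ys_def c_def)
qed

lemma finite_Jset: "finite (Jset n Z Mo)"
  unfolding Jset_def by simp

lemma rankJ_eq_lex_rank: "rankJ n Z Mo Yo i = lex_rank (Jset n Z Mo) Yo i"
  unfolding rankJ_def lex_rank_def psi_eq_lex using finite_Jset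
  by (simp add: sum.If_cases Int_def conj_commute)

lemma JL_subset: "JL n Z Mo Yo L \<subseteq> Jset n Z Mo"
  unfolding JL_def by blast

lemma card_JL:
  assumes "L \<le> card (Jset n Z Mo)"
  shows "card (JL n Z Mo Yo L) = L"
proof -
  let ?J = "Jset n Z Mo"
  have "card (JL n Z Mo Yo L) = card {i \<in> ?J. card ?J - L < lex_rank ?J Yo i}"
    unfolding JL_def rankJ_eq_lex_rank ..
  also have "\<dots> = card {r \<in> {1..card ?J}. card ?J - L < r}"
    by (rule card_lex_rank_filter[OF finite_Jset])
  also have "{r \<in> {1..card ?J}. card ?J - L < r} = {card ?J - L + 1..card ?J}"
    using assms by auto
  finally show ?thesis using assms by simp
qed

lemma JL_above:
  assumes "i \<in> Jset n Z Mo - JL n Z Mo Yo L" "l \<in> JL n Z Mo Yo L"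
  shows "(Yo i, i) < (Yo l, l)"
proof -
  have "\<not> lex_rank (Jset n Z Mo) Yo l \<le> lex_rank (Jset n Z Mo) Yo i"
    using assms unfolding JL_def rankJ_eq_lex_rank by auto
  moreover have "l \<in> Jset n Z Mo" using assms(2) JL_subset by blast
  ultimately have "\<not> (Yo l, l) \<le> (Yo i, i)"
    using assms(1) lex_rank_le_iff[OF finite_Jset, of i n Z Mo l Yo] by simp
  then show ?thesis by simp
qed

definition ctrl_imputed :: "mech \<Rightarrow> (nat \<Rightarrow> bool) \<Rightarrow> (nat \<Rightarrow> real) \<Rightarrow> nat \<Rightarrow> ereal" where
  "ctrl_imputed m M0 Y0 i = (if M0 i then ereal (Y0 i) else (case m of Mmn \<Rightarrow> -\<infinity> | _ \<Rightarrow> \<infinity>))"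

lemma Ytil_ctrl:
  "j \<notin> Z \<Longrightarrow> Ytil m Z (Mobs M1 M0 Z) (Yobs Y1 Y0 Z) \<delta> j = ctrl_imputed m M0 Y0 j"
  unfolding Ytil_def ctrl_imputed_def Mobs_def Yobs_def by (cases m) auto

lemma Ytil_treated:
  "i \<in> Z \<Longrightarrow> Ytil m Z (Mobs M1 M0 Z) (Yobs Y1 Y0 Z) \<delta> i =
     (if M1 i then ereal (Y1 i - \<delta> i) else (case m of Mg \<Rightarrow> -\<infinity> | Mmp \<Rightarrow> \<infinity> | Mmn \<Rightarrow> -\<infinity>))"
  unfolding Ytil_def Mobs_def Yobs_def by simp

lemma Ytil_antimono: "(\<And>i. \<delta> i \<le> \<delta>' i) \<Longrightarrow> Ytil m Z Mo Yo \<delta>' i \<le> Ytil m Z Mo Yo \<delta> i"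
  unfolding Ytil_def by (simp add: diff_mono)

lemma xi_mono: "c \<le> c' \<Longrightarrow> xi n n1 kap Z Mo Yo k c i \<le> xi n n1 kap Z Mo Yo k c' i"
  unfolding xi_def by simp

lemma tstat_Ytil_antimono:
  assumes "Z \<subseteq> {..<n}" "mono phi" "\<And>i. \<delta> i \<le> \<delta>' i"
  shows "tstat v phi n Z (Ytil m Z Mo Yo \<delta>') \<le> tstat v phi n Z (Ytil m Z Mo Yo \<delta>)"
proof (rule tstat_mono_stoch_le[OF assms(1,2)])
  let ?y = "Ytil m Z Mo Yo \<delta>" and ?y' = "Ytil m Z Mo Yo \<delta>'"
  show "stoch_le Z (lex_rank ({..<n} - Z) ?y') (lex_rank ({..<n} - Z) ?y)"
    using finite_subset[OF assms(1) finite_lessThan]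
  proof (rule stoch_le_pointwise)
    fix i
    have "(?y' i, i) \<le> (?y i, i)"
      using Ytil_antimono[OF assms(3)] by (simp add: less_eq_prod_def)
    then show "lex_rank ({..<n} - Z) ?y' i \<le> lex_rank ({..<n} - Z) ?y i"
      by (intro lex_rank_le_of_agree) (auto simp: Ytil_def intro: order.trans)
  qed
qed

lemma mono_pval:
  assumes "Z \<subseteq> {..<n}" "mono phi"
  shows "mono (pval v phi n n1 y0 m kap Mo Yo Z k)"
  unfolding pval_def
  by (intro monoI Gfun_antimono tstat_Ytil_antimono[OF assms] xi_mono)

locale treated_effect_bound =
  fixes n n1 k :: nat and Z :: "nat set" and M1 M0 :: "nat \<Rightarrow> bool" and Y1 Y0 :: "nat \<Rightarrow> real"
    and m :: mech and kap :: real
  assumes Z_cre: "Z \<in> cre n n1" and k_range: "k \<in> {1..n1}" and kap_pos: "0 < kap"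
    and mono_mp: "m = Mmp \<longrightarrow> (\<forall>i<n. M0 i \<le> M1 i)"
    and mono_mn: "m = Mmn \<longrightarrow> (\<forall>i<n. M1 i \<le> M0 i)"
begin

abbreviation "Mo \<equiv> Mobs M1 M0 Z"
abbreviation "Yo \<equiv> Yobs Y1 Y0 Z"
abbreviation "tau_k \<equiv> tau_sorted (\<lambda>i. Y1 i - Y0 i) Z k"
abbreviation "J \<equiv> Jset n Z Mo"
abbreviation "J_top \<equiv> JL n Z Mo Yo (min (n1 - k) (card J))"
abbreviation "J_exceed \<equiv> {i \<in> J. tau_k < Y1 i - Y0 i}"
abbreviation "shift_top \<equiv> Max (Yo ` J) - Min (Yo ` Cobs n Z Mo) + kap"
abbreviation "W \<equiv> ctrl_imputed m M0 Y0"
abbreviation "Yt \<equiv> Ytil m Z Mo Yo (xi n n1 kap Z Mo Yo k tau_k)"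

lemma Z_sub: "Z \<subseteq> {..<n}" and card_Z: "card Z = n1"
  using Z_cre unfolding cre_def by auto

lemma finite_Z: "finite Z"
  using finite_subset[OF Z_sub finite_lessThan] .

lemma J_eq: "J = {i \<in> Z. M1 i}"
  using Z_sub unfolding Jset_def Mobs_def by auto

lemma J_top_sub: "J_top \<subseteq> J"
  by (rule JL_subset)

lemma card_J_exceed_le: "card J_exceed \<le> card J_top"
proof -
  have "card J_exceed \<le> card {i \<in> Z. tau_k < Y1 i - Y0 i}"
    using finite_Z J_eq by (intro card_mono) auto
  also have "\<dots> \<le> n1 - k"
    by (rule card_gt_tau_sorted[OF finite_Z card_Z k_range])
  finally show ?thesis
    using card_mono[OF finite_Jset, of J_exceed] card_JL[of "min (n1 - k) (card J)"] by auto
qed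

lemma Yt_ctrl: "j \<notin> Z \<Longrightarrow> Yt j = W j"
  by (rule Ytil_ctrl)

lemma Yt_treated:
  "i \<in> Z \<Longrightarrow> Yt i = (if M1 i then ereal (Y1 i - (if i \<in> J_top then shift_top else tau_k))
                      else (case m of Mg \<Rightarrow> -\<infinity> | Mmp \<Rightarrow> \<infinity> | Mmn \<Rightarrow> -\<infinity>))"
  by (simp add: Ytil_treated xi_def)

lemma W_not_minf_on_J: "l \<in> J \<Longrightarrow> W l \<noteq> -\<infinity>"
  using mono_mn Z_sub J_eq by (cases m) (auto simp: ctrl_imputed_def le_bool_def)

lemma Y1_minus_tau_k_le_W: "l \<in> J - J_exceed \<Longrightarrow> ereal (Y1 l - tau_k) \<le> W l"
  using mono_mn Z_sub J_eq by (cases m) (auto simp: ctrl_imputed_def le_bool_def)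

lemma top_below_obs_ctrl:
  assumes "i \<in> J_top" "j \<in> {..<n} - Z" "M0 j"
  shows "Y1 i - shift_top < Y0 j"
proof -
  have "i \<in> J" using assms(1) J_top_sub by blast
  then have "Yo i \<le> Max (Yo ` J)" using finite_Jset by (intro Max_ge) auto
  moreover have "Yo i = Y1 i" using \<open>i \<in> J\<close> J_eq by (simp add: Yobs_def)
  moreover have "j \<in> Cobs n Z Mo" using assms(2,3) unfolding Cobs_def Mobs_def by simp
  then have "Min (Yo ` Cobs n Z Mo) \<le> Y0 j"
    using assms(2) unfolding Cobs_def by (auto simp: Yobs_def)
  ultimately show ?thesis using kap_pos by simp
qed

lemma Yt_le_W:
  assumes "i \<in> Z - (J_top \<union> J_exceed)"
  shows "Yt i \<le> W i"
proof (cases "M1 i")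
  case True
  then have "i \<in> J - J_exceed" "i \<notin> J_top" using assms J_eq by auto
  then show ?thesis using Y1_minus_tau_k_le_W True assms by (simp add: Yt_treated)
next
  case False
  then have Yt_i: "Yt i = (case m of Mg \<Rightarrow> -\<infinity> | Mmp \<Rightarrow> \<infinity> | Mmn \<Rightarrow> -\<infinity>)"
    using assms by (simp add: Yt_treated)
  have "m = Mmp \<Longrightarrow> \<not> M0 i" using mono_mp False assms Z_sub by (auto simp: le_bool_def)
  then show ?thesis unfolding Yt_i by (cases m) (auto simp: ctrl_imputed_def)
qed

lemma ctrl_rank_top_le:
  assumes "i \<in> J_top" "l \<in> J"
  shows "lex_rank ({..<n} - Z) Yt i \<le> lex_rank ({..<n} - Z) W l"
proof (rule lex_rank_le_of_agree)
  \<comment> \<open>only controls imputed at -\<infinity> rank below a unit of J_top\<close>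
  fix j assume j: "j \<in> {..<n} - Z" and le: "(W j, j) \<le> (Yt i, i)"
  have "i \<in> Z" "M1 i" using assms(1) J_top_sub J_eq by auto
  then have Yt_i: "Yt i = ereal (Y1 i - shift_top)" using assms(1) by (simp add: Yt_treated)
  have "W j = -\<infinity>"
  proof (cases "M0 j")
    case True
    then show ?thesis
      using le Yt_i top_below_obs_ctrl[OF assms(1) j True] by (auto simp: ctrl_imputed_def less_eq_prod_def)
  next
    case False
    then show ?thesis
      using le Yt_i by (cases m) (auto simp: ctrl_imputed_def less_eq_prod_def)
  qed
  then show "(W j, j) \<le> (W l, l)"
    using W_not_minf_on_J[OF assms(2)] by (simp add: less_eq_prod_def)
qed (simp_all add: Yt_ctrl)

lemma exceed_le_top:
  assumes "i \<in> J_exceed - J_top" "l \<in> J_top - J_exceed"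
  shows "(Yt i, i) \<le> (W l, l)"
proof -
  have "(Yo i, i) < (Yo l, l)" using assms by (intro JL_above) auto
  moreover have "i \<in> Z" "M1 i" "l \<in> Z" using assms J_top_sub J_eq by auto
  ultimately have "(ereal (Y1 i - tau_k), i) \<le> (ereal (Y1 l - tau_k), l)"
    by (auto simp: Yobs_def less_prod_def less_eq_prod_def)
  also have "\<dots> \<le> (W l, l)"
    using Y1_minus_tau_k_le_W assms(2) J_top_sub by (auto simp: less_eq_prod_def)
  finally show ?thesis using \<open>i \<in> Z\<close> \<open>M1 i\<close> assms(1) by (simp add: Yt_treated)
qed

lemma tstat_Yt_le_W:
  assumes "mono phi"
  shows "tstat v phi n Z Yt \<le> tstat v phi n Z W"
proof (rule tstat_mono_stoch_le[OF Z_sub assms])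
  show "stoch_le Z (lex_rank ({..<n} - Z) Yt) (lex_rank ({..<n} - Z) W)"
  proof (rule stoch_le_block_swap[OF finite_Z _ _ card_J_exceed_le])
    show "J_top \<subseteq> Z" "J_exceed \<subseteq> Z" using J_top_sub J_eq by auto
    show "lex_rank ({..<n} - Z) Yt i \<le> lex_rank ({..<n} - Z) W i" if "i \<in> Z - (J_top \<union> J_exceed)" for i
      using Yt_le_W[OF that] by (intro lex_rank_le_of_agree) (auto simp: Yt_ctrl less_eq_prod_def intro: order.trans)
    show "lex_rank ({..<n} - Z) Yt i \<le> lex_rank ({..<n} - Z) W l" if "i \<in> J_top" "l \<in> J_top \<union> J_exceed" for i l
      using that J_top_sub by (intro ctrl_rank_top_le) auto
    show "lex_rank ({..<n} - Z) Yt i \<le> lex_rank ({..<n} - Z) W l" if "i \<in> J_exceed - J_top" "l \<in> J_top - J_exceed" for i l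
      using exceed_le_top[OF that] by (intro lex_rank_le_of_agree) (auto simp: Yt_ctrl intro: order.trans)
  qed
qed

end

lemma pval_tau_sorted_ge:
  assumes "Z \<in> cre n n1" "k \<in> {1..n1}" "0 < kap" "mono phi"
    and "m = Mmp \<longrightarrow> (\<forall>i<n. M0 i \<le> M1 i)" "m = Mmn \<longrightarrow> (\<forall>i<n. M1 i \<le> M0 i)"
  shows "Gfun v phi n n1 y0 (tstat v phi n Z (ctrl_imputed m M0 Y0))
       \<le> pval v phi n n1 y0 m kap (Mobs M1 M0 Z) (Yobs Y1 Y0 Z) Z k (tau_sorted (\<lambda>i. Y1 i - Y0 i) Z k)"
proof -
  interpret treated_effect_bound n n1 k Z M1 M0 Y1 Y0 m kap
    using assms by unfold_locales
  show ?thesis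
    unfolding pval_def by (rule Gfun_antimono[OF tstat_Yt_le_W[OF assms(4)]])
qed

lemma simultaneous_coverage:
  assumes "n1 \<le> n" "0 \<le> alpha" "0 < kap" "mono phi"
    and "m = Mmp \<longrightarrow> (\<forall>i<n. M0 i \<le> M1 i)" "m = Mmn \<longrightarrow> (\<forall>i<n. M1 i \<le> M0 i)"
  shows "1 - alpha \<le> prob_cre n n1 (\<lambda>Z. \<forall>k\<in>{1..n1}.
           alpha < pval v phi n n1 y0 m kap (Mobs M1 M0 Z) (Yobs Y1 Y0 Z) Z k (tau_sorted (\<lambda>i. Y1 i - Y0 i) Z k))"
proof -
  define X where "X Z = tstat v phi n Z (ctrl_imputed m M0 Y0)" for Z
  have "prob_cre n n1 (\<lambda>Z. Gfun v phi n n1 y0 (X Z) \<le> alpha) \<le> alpha"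
    using prob_cre_pvalue_le[OF assms(2), of n n1 X]
    by (simp add: Gfun_eq_prob_tstat[where w = "ctrl_imputed m M0 Y0"] X_def)
  moreover have "alpha < pval v phi n n1 y0 m kap (Mobs M1 M0 Z) (Yobs Y1 Y0 Z) Z k (tau_sorted (\<lambda>i. Y1 i - Y0 i) Z k)"
    if "Z \<in> cre n n1" "\<not> Gfun v phi n n1 y0 (X Z) \<le> alpha" "k \<in> {1..n1}" for Z k
    using that(2) unfolding X_def not_le
    by (rule less_le_trans[OF _ pval_tau_sorted_ge[OF that(1,3) assms(3-6)]])
  then have "1 - prob_cre n n1 (\<lambda>Z. Gfun v phi n n1 y0 (X Z) \<le> alpha)
      \<le> prob_cre n n1 (\<lambda>Z. \<forall>k\<in>{1..n1}.
           alpha < pval v phi n n1 y0 m kap (Mobs M1 M0 Z) (Yobs Y1 Y0 Z) Z k (tau_sorted (\<lambda>i. Y1 i - Y0 i) Z k))"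
    by (intro prob_cre_compl_le[OF assms(1)]) blast
  ultimately show ?thesis by linarith
qed

lemma up_closed_eq_Inf_le_or_less:
  fixes S :: "real set"
  assumes up: "\<And>c c'. c \<in> S \<Longrightarrow> c \<le> c' \<Longrightarrow> c' \<in> S"
  shows "S = {c. Inf (ereal ` S) \<le> ereal c} \<or> S = {c. Inf (ereal ` S) < ereal c}"
proof -
  let ?m = "Inf (ereal ` S)"
  have lower: "?m \<le> ereal c" if "c \<in> S" for c using that by (simp add: INF_lower)
  have above: "c \<in> S" if "?m < ereal c" for c
  proof -
    have "\<exists>x\<in>ereal ` S. x < ereal c" using that by (simp add: Inf_less_iff)
    then obtain s where "s \<in> S" "ereal s < ereal c" by blast
    then show ?thesis using up by auto
  qed
  show ?thesis
  proof (cases "?m \<in> ereal ` S")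
    case True
    then obtain c0 where c0: "c0 \<in> S" "?m = ereal c0" by auto
    have "S = {c. ?m \<le> ereal c}"
    proof (intro equalityI subsetI)
      fix c assume "c \<in> {c. ?m \<le> ereal c}"
      then show "c \<in> S" using c0 up by simp
    qed (use lower in blast)
    then show ?thesis ..
  next
    case False
    have "S = {c. ?m < ereal c}"
    proof (intro equalityI subsetI)
      fix c assume "c \<in> S"
      then show "c \<in> {c. ?m < ereal c}"
        using lower[of c] False by (auto simp: order.order_iff_strict)
    qed (use above in blast)
    then show ?thesis ..
  qed
qed

theorem theorem7:
  fixes n n1 n0 :: nat and Y1 Y0 :: "nat \<Rightarrow> real" and M1 M0 :: "nat \<Rightarrow> bool"
    and m :: mech and v :: bool and phi :: "nat \<Rightarrow> real" and y0 :: "nat \<Rightarrow> real"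
    and kap alpha :: real
  assumes "n1 \<ge> 1" and "n0 \<ge> 1" and "n1 + n0 = n"
    and "mono phi"
    and "kap > 0"
    and "0 < alpha" and "alpha < 1"
    and "m = Mmp \<longrightarrow> (\<forall>i<n. M0 i \<le> M1 i)"
    and "m = Mmn \<longrightarrow> (\<forall>i<n. M1 i \<le> M0 i)"
  defines "tau \<equiv> \<lambda>i. Y1 i - Y0 i"
    and "I \<equiv> \<lambda>Z k. {c::real. pval v phi n n1 y0 m kap (Mobs M1 M0 Z) (Yobs Y1 Y0 Z) Z k c > alpha}"
  shows "(\<forall>k\<in>{1..n1}. prob_cre n n1 (\<lambda>Z. tau_sorted tau Z k \<in> I Z k) \<ge> 1 - alpha)
       \<and> (\<forall>Z\<in>cre n n1. \<forall>k\<in>{1..n1}.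
            I Z k = {c. Inf (ereal ` I Z k) \<le> ereal c} \<or> I Z k = {c. Inf (ereal ` I Z k) < ereal c})
       \<and> prob_cre n n1 (\<lambda>Z. \<forall>k\<in>{1..n1}. tau_sorted tau Z k \<in> I Z k) \<ge> 1 - alpha"
proof -
  have simultaneous: "1 - alpha \<le> prob_cre n n1 (\<lambda>Z. \<forall>k\<in>{1..n1}. tau_sorted tau Z k \<in> I Z k)"
    using simultaneous_coverage[of n1 n alpha kap phi m M0 M1] assms(3-9)
    unfolding I_def tau_def by simp
  moreover have "1 - alpha \<le> prob_cre n n1 (\<lambda>Z. tau_sorted tau Z k \<in> I Z k)" if "k \<in> {1..n1}" for k
  proof -
    have "prob_cre n n1 (\<lambda>Z. \<forall>k\<in>{1..n1}. tau_sorted tau Z k \<in> I Z k)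
        \<le> prob_cre n n1 (\<lambda>Z. tau_sorted tau Z k \<in> I Z k)"
      using that by (intro prob_cre_mono) blast
    with simultaneous show ?thesis by linarith
  qed
  moreover have "\<forall>Z\<in>cre n n1. \<forall>k\<in>{1..n1}.
      I Z k = {c. Inf (ereal ` I Z k) \<le> ereal c} \<or> I Z k = {c. Inf (ereal ` I Z k) < ereal c}"
  proof (intro ballI up_closed_eq_Inf_le_or_less)
    fix Z k c c' assume "Z \<in> cre n n1" "c \<in> I Z k" "c \<le> c'"
    then show "c' \<in> I Z k"
      using mono_pval[OF _ assms(4)] unfolding I_def cre_def by (blast dest: monoD intro: less_le_trans)
  qed
  ultimately show ?thesis by blast
qed

end
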